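(* Let $p>0$, $e\ge 0$ and $\omega\in\mathbb{R}$, and let $\hat{\mathbf p}=(\cos\omega,\sin\omega)$. Let $\mathbf x_1,\mathbf x_2,\mathbf x_3\in\mathbb{R}^2$ be three distinct points of the form $\mathbf x_i=(x_i,y_i)=r_i(\cos\varphi_i,\sin\varphi_i)$ with $1+e\cos(\varphi_i-\omega)>0$ and $$r_i=\frac{p}{1+e\cos(\varphi_i-\omega)}\qquad(i=1,2,3),$$ so that $r_i=\sqrt{x_i^2+y_i^2}>0$ (i.e. the three points lie on the single branch, given by this polar equation, of a conic with a focus at the origin, semi-latus rectum $p$, eccentricity $e$ and periapsis direction $\hat{\mathbf p}$). Define $$\mathbf u_{123}=(r_1+r_2)\begin{bmatrix} r_2x_1-r_1x_2\\ r_2y_1-r_1y_2\\ r_1-r_2\end{bmatrix},\qquad \mathbf v_{123}=(r_1+r_3)\begin{bmatrix} r_3x_1-r_1x_3\\ r_3y_1-r_1y_3\\ r_1-r_3\end{bmatrix},$$ and $\mathbf s=(s_1,s_2,s_3)=\mathbf u_{123}\times\mathbf v_{123}$. Then $s_3\neq 0$, and setting $X=s_1/s_3$, $Y=s_2/s_3$ and $$Z^2=\frac{1}{r_1^2}\Big(1-2Xx_1-2Yy_1-Y^2x_1^2+2XYx_1y_1-X^2y_1^2\Big)$$ (equivalently $Z^2=r_1^{-2}\,\bar{\mathbf x}_1^T M\bar{\mathbf x}_1$ with $\bar{\mathbf x}_1=[x_1;y_1;1]$ and $M=\begin{bmatrix}-Y^2&XY&-X\\ XY&-X^2&-Y\\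 -X&-Y&1\end{bmatrix}$), one has $X^2+Y^2+Z^2>0$, $$p=\frac{1}{\sqrt{X^2+Y^2+Z^2}},\qquad e=\sqrt{\frac{X^2+Y^2}{X^2+Y^2+Z^2}},$$ and, if $e>0$, $\hat{\mathbf p}=(X,Y)/\sqrt{X^2+Y^2}$. Moreover, the three points lie on the conic $\{(x,y): [x;y;1]^T C[x;y;1]=0\}$ with $C=\begin{bmatrix}-(Y^2+Z^2)&XY&-X\\ XY&-(X^2+Z^2)&-Y\\ -X&-Y&1\end{bmatrix}$.
   Context: Points of $\mathbb{R}^2$ are identified with homogeneous coordinates $[x;y;1]$ in the projective plane. The cross product $\times$ is the usual cross product in $\mathbb{R}^3$. The polar equation $r=p/(1+e\cos\theta)$, with $\theta$ the angle from the periapsis direction $\hat{\mathbf p}$, describes a Keplerian orbit (ellipse, parabola, or one branch of a hyperbola) with focus at the origin. *)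

theory Defs
  imports "HOL-Analysis.Analysis"
begin

definition cross3 :: "real \<times> real \<times> real \<Rightarrow> real \<times> real \<times> real \<Rightarrow> real \<times> real \<times> real" where
  "cross3 a b = (case a of (a1,a2,a3) \<Rightarrow> case b of (b1,b2,b3) \<Rightarrow>
     (a2*b3 - a3*b2, a3*b1 - a1*b3, a1*b2 - a2*b1))"

definition conic_form :: "(real \<times> real \<times> real) \<times> (real \<times> real \<times> real) \<times> (real \<times> real \<times> real) \<Rightarrow> real \<Rightarrow> real \<Rightarrow> real" where
  "conic_form C x y = (case C of ((c11,c12,c13),(c21,c22,c23),(c31,c32,c33)) \<Rightarrow>
     x*(c11*x + c12*y + c13) + y*(c21*x + c22*y + c23) + (c31*x + c32*y + c33))"

end

theory Submission
  imports Defs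
begin

text \<open>With \<open>(a, b) = e (cos \<omega>, sin \<omega>)\<close> the polar equation reads \<open>r = p - a x - b y\<close>, so the lifted
  points \<open>(x\<^sub>i, y\<^sub>i, r\<^sub>i)\<close> lie on the cone \<open>x\<^sup>2 + y\<^sup>2 = r\<^sup>2\<close> and on the plane \<open>r + a x + b y = p\<close>.
  Up to the factors \<open>r\<^sub>1 + r\<^sub>j\<close> the vectors \<open>u\<close> and \<open>v\<close> are
  \<open>(r\<^sub>j x\<^sub>1 - r\<^sub>1 x\<^sub>j, r\<^sub>j y\<^sub>1 - r\<^sub>1 y\<^sub>j, r\<^sub>1 - r\<^sub>j)\<close>, which are orthogonal to \<open>(a, b, p)\<close>; hence
  \<open>u \<times> v\<close> is parallel to \<open>(a, b, p)\<close> and \<open>(X, Y) = (a, b) / p\<close>. Its third component is a nonzero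
  multiple of the area of the triangle \<open>x\<^sub>1 x\<^sub>2 x\<^sub>3\<close>, and no three points of the conic are collinear:
  a lifted line through three of them meets the cone three times, so lies on it and passes
  through the apex \<open>0\<close>, which is not on the plane because \<open>p \<noteq> 0\<close>. Finally the conic equation at
  \<open>x\<^sub>1\<close> gives \<open>Z\<^sup>2 = (1 - e\<^sup>2) / p\<^sup>2\<close>, so \<open>X\<^sup>2 + Y\<^sup>2 + Z\<^sup>2 = 1 / p\<^sup>2\<close>, from which \<open>p\<close>, \<open>e\<close> and
  \<open>\<omega>\<close> are read off.\<close>

definition on_focal_conic :: "real \<Rightarrow> real \<Rightarrow> real \<Rightarrow> real \<Rightarrow> real \<Rightarrow> real \<Rightarrow> bool" where
  "on_focal_conic a b p x y r \<longleftrightarrow> x\<^sup>2 + y\<^sup>2 = r\<^sup>2 \<and> r + a * x + b * y = p"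

lemma cross3_parallel_to_common_normal:
  fixes a b c u1 u2 u3 v1 v2 v3 :: real
  assumes "a * u1 + b * u2 + c * u3 = 0" and "a * v1 + b * v2 + c * v3 = 0"
  defines "s \<equiv> cross3 (u1, u2, u3) (v1, v2, v3)"
  shows "c * fst s = a * snd (snd s)" and "c * fst (snd s) = b * snd (snd s)"
  using assms(1,2) unfolding s_def cross3_def by simp_all algebra+

lemma lifted_chord_orthogonal:
  fixes a b p k x1 y1 r1 x2 y2 r2 :: real
  assumes "r1 + a * x1 + b * y1 = p" and "r2 + a * x2 + b * y2 = p"
  shows "a * (k * (r2 * x1 - r1 * x2)) + b * (k * (r2 * y1 - r1 * y2)) + p * (k * (r1 - r2)) = 0"
proof -
  have "a * (k * (r2 * x1 - r1 * x2)) + b * (k * (r2 * y1 - r1 * y2)) + p * (k * (r1 - r2))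
      = k * (r2 * (r1 + a * x1 + b * y1 - p) - r1 * (r2 + a * x2 + b * y2 - p))"
    by (simp add: algebra_simps)
  then show ?thesis using assms by simp
qed

lemma cross3_lifted_chords_third:
  fixes a b p x1 y1 r1 x2 y2 r2 x3 y3 r3 :: real
  assumes "r1 + a * x1 + b * y1 = p" "r2 + a * x2 + b * y2 = p" "r3 + a * x3 + b * y3 = p"
  shows "snd (snd (cross3
      ((r1 + r2) * (r2 * x1 - r1 * x2), (r1 + r2) * (r2 * y1 - r1 * y2), (r1 + r2) * (r1 - r2))
      ((r1 + r3) * (r3 * x1 - r1 * x3), (r1 + r3) * (r3 * y1 - r1 * y3), (r1 + r3) * (r1 - r3))))
    = (r1 + r2) * (r1 + r3) * r1 * p * ((x2 - x1) * (y3 - y1) - (x3 - x1) * (y2 - y1))"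
proof -
  have r: "r1 = p - a * x1 - b * y1" "r2 = p - a * x2 - b * y2" "r3 = p - a * x3 - b * y3"
    using assms by simp_all
  have "snd (snd (cross3
      ((r1 + r2) * (r2 * x1 - r1 * x2), (r1 + r2) * (r2 * y1 - r1 * y2), (r1 + r2) * (r1 - r2))
      ((r1 + r3) * (r3 * x1 - r1 * x3), (r1 + r3) * (r3 * y1 - r1 * y3), (r1 + r3) * (r1 - r3))))
    = (r1 + r2) * (r1 + r3) * r1
      * (r1 * (x2 * y3 - x3 * y2) + r2 * (x3 * y1 - x1 * y3) + r3 * (x1 * y2 - x2 * y1))"
    by (simp add: cross3_def) algebra
  also have "r1 * (x2 * y3 - x3 * y2) + r2 * (x3 * y1 - x1 * y3) + r3 * (x1 * y2 - x2 * y1)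
      = p * ((x2 - x1) * (y3 - y1) - (x3 - x1) * (y2 - y1))"
    unfolding r by algebra
  finally show ?thesis by simp
qed

lemma collinear_point_on_line:
  fixes x1 y1 x2 y2 x3 y3 :: real
  assumes "(x2 - x1) * (y3 - y1) - (x3 - x1) * (y2 - y1) = 0" and "(x1, y1) \<noteq> (x2, y2)"
  obtains t where "x3 = x1 + t * (x2 - x1)" and "y3 = y1 + t * (y2 - y1)"
proof (cases "x1 = x2")
  case True
  then show ?thesis using assms that[of "(y3 - y1) / (y2 - y1)"] by auto
next
  case False
  then show ?thesis using assms that[of "(x3 - x1) / (x2 - x1)"] by (auto simp: field_simps)
qed

lemma quadratic_coeffs_eq_0_if_three_roots:
  fixes c0 c1 c2 s1 s2 s3 :: real
  assumes "s1 \<noteq> s2" "s1 \<noteq> s3" "s2 \<noteq> s3"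
    and "\<And>s. s \<in> {s1, s2, s3} \<Longrightarrow> c0 + c1 * s + c2 * s\<^sup>2 = 0"
  shows "c0 = 0 \<and> c1 = 0 \<and> c2 = 0"
proof -
  have "(c1 + c2 * (s1 + s2)) * (s1 - s2) = 0" "(c1 + c2 * (s1 + s3)) * (s1 - s3) = 0"
    using assms(4)[of s1] assms(4)[of s2] assms(4)[of s3] by (simp_all add: power2_eq_square algebra_simps)
  then have "c1 + c2 * (s1 + s2) = 0" "c1 + c2 * (s1 + s3) = 0"
    using assms(1,2) by simp_all
  then have "c2 * (s2 - s3) = 0" by argo
  then have "c2 = 0" using assms(3) by simp
  then show ?thesis using \<open>c1 + c2 * (s1 + s2) = 0\<close> assms(4)[of s1] by simp
qed

lemma line_on_cone_if_three_points:
  fixes x0 y0 r0 dx dy dr t s :: real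
  assumes "t \<noteq> 0" and "t \<noteq> 1"
    and meets: "\<And>s. s \<in> {0, 1, t} \<Longrightarrow> (x0 + s * dx)\<^sup>2 + (y0 + s * dy)\<^sup>2 = (r0 + s * dr)\<^sup>2"
  shows "(x0 + s * dx)\<^sup>2 + (y0 + s * dy)\<^sup>2 = (r0 + s * dr)\<^sup>2"
proof -
  define c0 c1 c2 where "c0 = x0\<^sup>2 + y0\<^sup>2 - r0\<^sup>2" and "c1 = 2 * (x0 * dx + y0 * dy - r0 * dr)"
    and "c2 = dx\<^sup>2 + dy\<^sup>2 - dr\<^sup>2"
  have expand: "(x0 + s * dx)\<^sup>2 + (y0 + s * dy)\<^sup>2 - (r0 + s * dr)\<^sup>2 = c0 + c1 * s + c2 * s\<^sup>2" for s
    unfolding c0_def c1_def c2_def by (simp add: power2_eq_square algebra_simps)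
  have "c0 + c1 * s + c2 * s\<^sup>2 = 0" if "s \<in> {0, 1, t}" for s
    using meets[OF that] expand[of s] by simp
  then have "c0 = 0 \<and> c1 = 0 \<and> c2 = 0"
    using assms(1,2) quadratic_coeffs_eq_0_if_three_roots[OF zero_neq_one] by metis
  then show ?thesis using expand[of s] by simp
qed

lemma line_on_cone_through_apex:
  fixes x0 y0 r0 dx dy dr :: real
  assumes on_cone: "\<And>s. (x0 + s * dx)\<^sup>2 + (y0 + s * dy)\<^sup>2 = (r0 + s * dr)\<^sup>2"
    and "(dx, dy) \<noteq> (0, 0)"
  obtains s where "x0 + s * dx = 0" and "y0 + s * dy = 0" and "r0 + s * dr = 0"
proof -
  have "dx\<^sup>2 + dy\<^sup>2 = dr\<^sup>2"
    using on_cone[of 1] on_cone[of "-1"] on_cone[of 0] by algebra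
  moreover have "dx\<^sup>2 + dy\<^sup>2 \<noteq> 0" using assms(2) by simp
  ultimately have "dr \<noteq> 0" by auto
  define s where "s = - r0 / dr"
  have "r0 + s * dr = 0" unfolding s_def using \<open>dr \<noteq> 0\<close> by simp
  moreover from this have "x0 + s * dx = 0" "y0 + s * dy = 0"
    using on_cone[of s] by (simp_all add: sum_power2_eq_zero_iff)
  ultimately show ?thesis using that by blast
qed

lemma focal_conic_no_three_collinear:
  fixes a b p x1 y1 r1 x2 y2 r2 x3 y3 r3 :: real
  assumes "p \<noteq> 0"
    and P1: "on_focal_conic a b p x1 y1 r1" and P2: "on_focal_conic a b p x2 y2 r2"
    and P3: "on_focal_conic a b p x3 y3 r3"
    and "(x1, y1) \<noteq> (x2, y2)" "(x1, y1) \<noteq> (x3, y3)" "(x2, y2) \<noteq> (x3, y3)"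
  shows "(x2 - x1) * (y3 - y1) - (x3 - x1) * (y2 - y1) \<noteq> 0"
proof
  assume "(x2 - x1) * (y3 - y1) - (x3 - x1) * (y2 - y1) = 0"
  then obtain t where x3: "x3 = x1 + t * (x2 - x1)" and y3: "y3 = y1 + t * (y2 - y1)"
    using assms(5) by (rule collinear_point_on_line)
  define dx dy dr where "dx = x2 - x1" and "dy = y2 - y1" and "dr = r2 - r1"
  have plane: "(r1 + s * dr) + a * (x1 + s * dx) + b * (y1 + s * dy) = p" for s
  proof -
    have "(r1 + s * dr) + a * (x1 + s * dx) + b * (y1 + s * dy)
        = (1 - s) * (r1 + a * x1 + b * y1) + s * (r2 + a * x2 + b * y2)"
      unfolding dx_def dy_def dr_def by (simp add: algebra_simps)
    also have "\<dots> = (1 - s) * p + s * p" using P1 P2 unfolding on_focal_conic_def by simp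
    finally show ?thesis by (simp add: algebra_simps)
  qed
  have r3: "r3 = r1 + t * dr"
    using plane[of t] P3 unfolding on_focal_conic_def x3 y3 dx_def dy_def by simp
  have "t \<noteq> 0" "t \<noteq> 1"
    using assms(6,7) unfolding x3 y3 by auto
  then have on_cone: "(x1 + s * dx)\<^sup>2 + (y1 + s * dy)\<^sup>2 = (r1 + s * dr)\<^sup>2" for s
  proof (rule line_on_cone_if_three_points)
    fix s :: real
    assume "s \<in> {0, 1, t}"
    then consider "s = 0" | "s = 1" | "s = t" by blast
    then show "(x1 + s * dx)\<^sup>2 + (y1 + s * dy)\<^sup>2 = (r1 + s * dr)\<^sup>2"
      using P1 P2 P3 unfolding on_focal_conic_def x3 y3 r3 dx_def dy_def dr_def by cases simp_all
  qed
  moreover have "(dx, dy) \<noteq> (0, 0)" using assms(5) unfolding dx_def dy_def by auto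
  ultimately obtain s where "x1 + s * dx = 0" "y1 + s * dy = 0" "r1 + s * dr = 0"
    by (rule line_on_cone_through_apex)
  then show False
    using plane[of s] \<open>p \<noteq> 0\<close> by simp
qed

lemma polar_point_on_focal_conic:
  fixes p e \<omega> \<phi> r x y :: real
  assumes "p > 0" and "1 + e * cos (\<phi> - \<omega>) > 0" and "r = p / (1 + e * cos (\<phi> - \<omega>))"
    and "x = r * cos \<phi>" and "y = r * sin \<phi>"
  shows "r > 0" and "on_focal_conic (e * cos \<omega>) (e * sin \<omega>) p x y r"
proof -
  show "r > 0" using assms(1-3) by simp
  have "x\<^sup>2 + y\<^sup>2 = r\<^sup>2"
    unfolding assms(4,5) by (simp add: power_mult_distrib flip: distrib_left)
  moreover have "r * (1 + e * cos (\<phi> - \<omega>)) = p" using assms(2,3) by simp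
  ultimately show "on_focal_conic (e * cos \<omega>) (e * sin \<omega>) p x y r"
    unfolding on_focal_conic_def assms(4,5) cos_diff by (simp add: algebra_simps)
qed

lemma focal_conic_Z2_at_point:
  fixes a b p x y r :: real
  assumes "on_focal_conic a b p x y r" and "p \<noteq> 0" and "r \<noteq> 0"
  shows "(1 / r\<^sup>2) * (1 - 2 * (a / p) * x - 2 * (b / p) * y - (b / p)\<^sup>2 * x\<^sup>2
      + 2 * (a / p) * (b / p) * x * y - (a / p)\<^sup>2 * y\<^sup>2) = (1 - a\<^sup>2 - b\<^sup>2) / p\<^sup>2"
proof -
  have "p\<^sup>2 * (1 - 2 * (a / p) * x - 2 * (b / p) * y - (b / p)\<^sup>2 * x\<^sup>2
      + 2 * (a / p) * (b / p) * x * y - (a / p)\<^sup>2 * y\<^sup>2)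
      = p\<^sup>2 - 2 * p * (a * x + b * y) - (b * x - a * y)\<^sup>2"
    using assms(2) by (simp add: field_simps power2_eq_square)
  also have "\<dots> = (1 - a\<^sup>2 - b\<^sup>2) * r\<^sup>2"
    using assms(1) unfolding on_focal_conic_def by algebra
  finally show ?thesis using assms(2,3) by (simp add: field_simps)
qed

lemma focal_conic_form_eq_0:
  fixes a b p x y r :: real
  assumes "on_focal_conic a b p x y r" and "p \<noteq> 0"
  defines "X \<equiv> a / p" and "Y \<equiv> b / p" and "Z2 \<equiv> (1 - a\<^sup>2 - b\<^sup>2) / p\<^sup>2"
  shows "conic_form ((-(Y\<^sup>2 + Z2), X * Y, -X), (X * Y, -(X\<^sup>2 + Z2), -Y), (-X, -Y, 1)) x y = 0"
proof -
  have "p\<^sup>2 * conic_form ((-(Y\<^sup>2 + Z2), X * Y, -X), (X * Y, -(X\<^sup>2 + Z2), -Y), (-X, -Y, 1)) x y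
      = (p - a * x - b * y)\<^sup>2 - x\<^sup>2 - y\<^sup>2"
    using assms(2) unfolding conic_form_def X_def Y_def Z2_def by (simp add: field_simps power2_eq_square)
  also have "\<dots> = 0"
    using assms(1) unfolding on_focal_conic_def by algebra
  finally show ?thesis using assms(2) by simp
qed

lemma focal_conic_parameters:
  fixes p e \<omega> :: real
  assumes "p > 0" and "e \<ge> 0"
  defines "X \<equiv> e * cos \<omega> / p" and "Y \<equiv> e * sin \<omega> / p"
    and "Z2 \<equiv> (1 - (e * cos \<omega>)\<^sup>2 - (e * sin \<omega>)\<^sup>2) / p\<^sup>2"
  shows "X\<^sup>2 + Y\<^sup>2 + Z2 > 0"
    and "p = 1 / sqrt (X\<^sup>2 + Y\<^sup>2 + Z2)"
    and "e = sqrt ((X\<^sup>2 + Y\<^sup>2) / (X\<^sup>2 + Y\<^sup>2 + Z2))"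
    and "e > 0 \<Longrightarrow> (cos \<omega>, sin \<omega>) = (X / sqrt (X\<^sup>2 + Y\<^sup>2), Y / sqrt (X\<^sup>2 + Y\<^sup>2))"
proof -
  have e2: "(e * cos \<omega>)\<^sup>2 + (e * sin \<omega>)\<^sup>2 = e\<^sup>2"
    by (simp add: power_mult_distrib flip: distrib_left)
  have XY: "X\<^sup>2 + Y\<^sup>2 = e\<^sup>2 / p\<^sup>2"
    unfolding X_def Y_def power_divide add_divide_distrib[symmetric] e2 ..
  have sum: "X\<^sup>2 + Y\<^sup>2 + Z2 = 1 / p\<^sup>2"
    unfolding XY Z2_def diff_diff_eq e2 by (simp add: diff_divide_distrib add_divide_distrib[symmetric])
  show "X\<^sup>2 + Y\<^sup>2 + Z2 > 0" unfolding sum using assms(1) by simp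
  show "p = 1 / sqrt (X\<^sup>2 + Y\<^sup>2 + Z2)" unfolding sum using assms(1) by (simp add: real_sqrt_divide)
  show "e = sqrt ((X\<^sup>2 + Y\<^sup>2) / (X\<^sup>2 + Y\<^sup>2 + Z2))" unfolding sum unfolding XY using assms by simp
  show "(cos \<omega>, sin \<omega>) = (X / sqrt (X\<^sup>2 + Y\<^sup>2), Y / sqrt (X\<^sup>2 + Y\<^sup>2))" if "e > 0"
    unfolding XY unfolding X_def Y_def using that assms(1) by (simp add: real_sqrt_divide)
qed

theorem mainTheorem1:
  fixes p e \<omega> :: real and x y r \<phi> :: "nat \<Rightarrow> real"
  assumes hp: "p > 0" and he: "e \<ge> 0"
    and hpos: "\<And>i. i \<in> {1,2,3} \<Longrightarrow> 1 + e * cos (\<phi> i - \<omega>) > 0"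
    and hr: "\<And>i. i \<in> {1,2,3} \<Longrightarrow> r i = p / (1 + e * cos (\<phi> i - \<omega>))"
    and hx: "\<And>i. i \<in> {1,2,3} \<Longrightarrow> x i = r i * cos (\<phi> i)"
    and hy: "\<And>i. i \<in> {1,2,3} \<Longrightarrow> y i = r i * sin (\<phi> i)"
    and hdist: "(x 1, y 1) \<noteq> (x 2, y 2)" "(x 1, y 1) \<noteq> (x 3, y 3)" "(x 2, y 2) \<noteq> (x 3, y 3)"
  defines "u \<equiv> ((r 1 + r 2) * (r 2 * x 1 - r 1 * x 2), (r 1 + r 2) * (r 2 * y 1 - r 1 * y 2),
                 (r 1 + r 2) * (r 1 - r 2))"
    and "v \<equiv> ((r 1 + r 3) * (r 3 * x 1 - r 1 * x 3), (r 1 + r 3) * (r 3 * y 1 - r 1 * y 3),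
                 (r 1 + r 3) * (r 1 - r 3))"
  shows "snd (snd (cross3 u v)) \<noteq> 0 \<and>
    (let s = cross3 u v; X = fst s / snd (snd s); Y = fst (snd s) / snd (snd s);
         Z2 = (1 / (r 1)^2) * (1 - 2*X*x 1 - 2*Y*y 1 - Y^2*(x 1)^2 + 2*X*Y*x 1*y 1 - X^2*(y 1)^2);
         C = ((-(Y^2 + Z2), X*Y, -X), (X*Y, -(X^2 + Z2), -Y), (-X, -Y, 1))
     in X^2 + Y^2 + Z2 > 0
        \<and> p = 1 / sqrt (X^2 + Y^2 + Z2)
        \<and> e = sqrt ((X^2 + Y^2) / (X^2 + Y^2 + Z2))
        \<and> (e > 0 \<longrightarrow> (cos \<omega>, sin \<omega>) = (X / sqrt (X^2 + Y^2), Y / sqrt (X^2 + Y^2)))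
        \<and> (\<forall>i\<in>{1,2,3}. conic_form C (x i) (y i) = 0))"
proof -
  define a b where "a = e * cos \<omega>" and "b = e * sin \<omega>"
  have r_pos: "r i > 0" and on_conic: "on_focal_conic a b p (x i) (y i) (r i)" if "i \<in> {1, 2, 3}" for i
    using polar_point_on_focal_conic[OF hp hpos[OF that] hr[OF that] hx[OF that] hy[OF that]]
    unfolding a_def b_def by simp_all
  have lin: "r 1 + a * x 1 + b * y 1 = p" "r 2 + a * x 2 + b * y 2 = p" "r 3 + a * x 3 + b * y 3 = p"
    using on_conic[of 1] on_conic[of 2] on_conic[of 3] unfolding on_focal_conic_def by simp_all
  define s where "s = cross3 u v"
  have "snd (snd s) = (r 1 + r 2) * (r 1 + r 3) * r 1 * p
      * ((x 2 - x 1) * (y 3 - y 1) - (x 3 - x 1) * (y 2 - y 1))"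
    unfolding s_def u_def v_def using lin by (rule cross3_lifted_chords_third)
  moreover have "(x 2 - x 1) * (y 3 - y 1) - (x 3 - x 1) * (y 2 - y 1) \<noteq> 0"
    using hp on_conic hdist by (intro focal_conic_no_three_collinear[where a = a and b = b and p = p]) auto
  ultimately have s3: "snd (snd s) \<noteq> 0"
    using r_pos[of 1] r_pos[of 2] r_pos[of 3] hp by simp
  have "p * fst s = a * snd (snd s)" and "p * fst (snd s) = b * snd (snd s)"
    unfolding s_def u_def v_def
    using cross3_parallel_to_common_normal[OF lifted_chord_orthogonal[OF lin(1,2)]
        lifted_chord_orthogonal[OF lin(1,3)]] by simp_all
  then have X: "fst s / snd (snd s) = a / p" and Y: "fst (snd s) / snd (snd s) = b / p"
    using s3 hp by (simp_all add: field_simps)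
  have Z2: "(1 / (r 1)\<^sup>2) * (1 - 2 * (a / p) * x 1 - 2 * (b / p) * y 1 - (b / p)\<^sup>2 * (x 1)\<^sup>2
      + 2 * (a / p) * (b / p) * x 1 * y 1 - (a / p)\<^sup>2 * (y 1)\<^sup>2) = (1 - a\<^sup>2 - b\<^sup>2) / p\<^sup>2"
    using hp r_pos[of 1] by (intro focal_conic_Z2_at_point on_conic) simp_all
  show ?thesis
    unfolding s_def[symmetric] Let_def X Y Z2
    using s3 focal_conic_parameters[OF hp he] focal_conic_form_eq_0[OF on_conic] hp
    unfolding a_def b_def by simp
qed

end
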